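(* For every $\varepsilon>0$ there exists $\delta>0$ such that for all sufficiently large $n$ the following holds: if $\mu\in\mathcal P(\Omega^n)$ is $(\delta,2)$-symmetric, then $\mu\otimes\mu$, viewed as a probability measure on $(\Omega\times\Omega)^n\cong\Omega^n\times\Omega^n$, is $(\varepsilon,2)$-symmetric.
   Context: $\Omega$ is a fixed finite nonempty set, $\mathcal P(\mathcal X)$ the set of probability measures on a finite set $\mathcal X$, $\|\cdot\|_{TV}$ total variation. For a finite set $\Omega'$ (here $\Omega$ or $\Omega\times\Omega$), $\nu\in\mathcal P(\Omega'^n)$ and $x,y\in[n]$, let $\nu_{\downarrow x}$ be the law of $\boldsymbol\sigma(x)$ and $\nu_{\downarrow\{x,y\}}$ the joint law of $(\boldsymbol\sigma(x),\boldsymbol\sigma(y))$ for $\boldsymbol\sigma\sim\nu$. The measure $\nu$ is $(\varepsilon,2)$-symmetric if $\frac1{n^2}\sum_{x,y\in[n]}\|\nu_{\downarrow\{x,y\}}-\nu_{\downarrow x}\otimes\nu_{\downarrow y}\|_{TV}<\varepsilon$. The identification of $\Omega^n\times\Omega^n$ with $(\Omega\times\Omega)^n$ maps $(\sigma,\tau)$ to $((\sigma(x),\tau(x)))_{x\in[n]}$. *)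

theory Defs
  imports "HOL-Probability.Probability"
begin

definition tv_dist :: "'b pmf \<Rightarrow> 'b pmf \<Rightarrow> real" where
  "tv_dist p q = (SUP A. \<bar>measure_pmf.prob p A - measure_pmf.prob q A\<bar>)"

text \<open>Configurations in \<Omega>^n are functions nat \<Rightarrow> \<Omega>, extensional on [n] = {..<n}.\<close>
definition marg1 :: "(nat \<Rightarrow> 'b) pmf \<Rightarrow> nat \<Rightarrow> 'b pmf" where
  "marg1 \<nu> x = map_pmf (\<lambda>\<sigma>. \<sigma> x) \<nu>"

definition marg2 :: "(nat \<Rightarrow> 'b) pmf \<Rightarrow> nat \<Rightarrow> nat \<Rightarrow> ('b \<times> 'b) pmf" where
  "marg2 \<nu> x y = map_pmf (\<lambda>\<sigma>. (\<sigma> x, \<sigma> y)) \<nu>"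

definition eps2_symmetric :: "nat \<Rightarrow> real \<Rightarrow> (nat \<Rightarrow> 'b) pmf \<Rightarrow> bool" where
  "eps2_symmetric n \<epsilon> \<nu> \<longleftrightarrow>
     (1 / (real n)^2) * (\<Sum>x<n. \<Sum>y<n. tv_dist (marg2 \<nu> x y) (pair_pmf (marg1 \<nu> x) (marg1 \<nu> y))) < \<epsilon>"

definition tensor_sq :: "nat \<Rightarrow> (nat \<Rightarrow> 'b) pmf \<Rightarrow> (nat \<Rightarrow> 'b \<times> 'b) pmf" where
  "tensor_sq n \<mu> = map_pmf (\<lambda>(\<sigma>, \<tau>). \<lambda>x\<in>{..<n}. (\<sigma> x, \<tau> x)) (pair_pmf \<mu> \<mu>)"

end

theory Submission
  imports Defs
begin

text \<open>The pair marginal of \<open>\<mu> \<otimes> \<mu>\<close> at \<open>(x, y)\<close> is, after reordering coordinates, the product of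
  two copies of the pair marginal of \<open>\<mu>\<close>, and likewise for the product of the one-point marginals.
  Total variation distance is subadditive on products, so every summand at most doubles and
  \<open>\<delta> = \<epsilon> / 2\<close> works for all \<open>n\<close>.\<close>

lemma measure_bind_pmf:
  "measure_pmf.prob (bind_pmf M N) X = (\<integral>x. measure_pmf.prob (N x) X \<partial>M)"
  unfolding measure_pmf_bind
  using measurable_measure_pmf[of N]
  by (intro measure_pmf.measure_bind[where N="count_space UNIV"]) auto

lemma abs_prob_diff_le_tv_dist:
  "\<bar>measure_pmf.prob p A - measure_pmf.prob q A\<bar> \<le> tv_dist p q"
proof -
  have "bdd_above (range (\<lambda>A. \<bar>measure_pmf.prob p A - measure_pmf.prob q A\<bar>))"
  proof (rule bdd_aboveI2)
    fix A
    have "measure_pmf.prob p A \<le> 1" "measure_pmf.prob q A \<le> 1" by auto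
    then show "\<bar>measure_pmf.prob p A - measure_pmf.prob q A\<bar> \<le> 1"
      using measure_nonneg[of p A] measure_nonneg[of q A] by linarith
  qed
  then show ?thesis
    unfolding tv_dist_def by (rule cSUP_upper[rotated]) simp
qed

lemma tv_dist_le:
  "(\<And>A. \<bar>measure_pmf.prob p A - measure_pmf.prob q A\<bar> \<le> c) \<Longrightarrow> tv_dist p q \<le> c"
  unfolding tv_dist_def by (rule cSUP_least) auto

lemma tv_dist_map_pmf_le: "tv_dist (map_pmf f p) (map_pmf f q) \<le> tv_dist p q"
  by (rule tv_dist_le) (simp add: abs_prob_diff_le_tv_dist)

lemma tv_dist_triangle: "tv_dist p r \<le> tv_dist p q + tv_dist q r"
proof (rule tv_dist_le)
  fix A
  show "\<bar>measure_pmf.prob p A - measure_pmf.prob r A\<bar> \<le> tv_dist p q + tv_dist q r"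
    using abs_prob_diff_le_tv_dist[of p A q] abs_prob_diff_le_tv_dist[of q A r] by linarith
qed

lemma tv_dist_bind_pmf_le:
  fixes f g :: "'a \<Rightarrow> 'b pmf"
  assumes "\<And>x. tv_dist (f x) (g x) \<le> c"
  shows "tv_dist (bind_pmf M f) (bind_pmf M g) \<le> c"
proof (rule tv_dist_le)
  fix A :: "'b set"
  have integrable: "integrable M (\<lambda>x. measure_pmf.prob (h x) A)" for h :: "_ \<Rightarrow> _ pmf"
    by (rule measure_pmf.integrable_const_bound[where B=1]) auto
  have "\<bar>measure_pmf.prob (bind_pmf M f) A - measure_pmf.prob (bind_pmf M g) A\<bar>
      = \<bar>\<integral>x. measure_pmf.prob (f x) A - measure_pmf.prob (g x) A \<partial>M\<bar>"
    by (simp add: measure_bind_pmf integrable)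
  also have "\<dots> \<le> (\<integral>x. \<bar>measure_pmf.prob (f x) A - measure_pmf.prob (g x) A\<bar> \<partial>M)"
    by (rule integral_abs_bound)
  also have "\<dots> \<le> (\<integral>x. c \<partial>M)"
    using Bochner_Integration.integrable_diff[OF integrable integrable]
    by (intro integral_mono integrable_abs)
       (auto intro: order_trans[OF abs_prob_diff_le_tv_dist assms])
  also have "\<dots> = c" by simp
  finally show "\<bar>measure_pmf.prob (bind_pmf M f) A - measure_pmf.prob (bind_pmf M g) A\<bar> \<le> c" .
qed

lemma tv_dist_pair_pmf_left_le: "tv_dist (pair_pmf p r) (pair_pmf q r) \<le> tv_dist p q"
proof -
  have "pair_pmf s r = bind_pmf r (\<lambda>b. map_pmf (\<lambda>a. (a, b)) s)" for s :: "'a pmf"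
    unfolding pair_pmf_def map_pmf_def by (rule bind_commute_pmf)
  then show ?thesis
    by (simp add: tv_dist_bind_pmf_le tv_dist_map_pmf_le)
qed

lemma tv_dist_pair_pmf_right_le: "tv_dist (pair_pmf r p) (pair_pmf r q) \<le> tv_dist p q"
  unfolding pair_pmf_def map_pmf_def[symmetric]
  by (simp add: tv_dist_bind_pmf_le tv_dist_map_pmf_le)

lemma tv_dist_pair_pmf_le:
  "tv_dist (pair_pmf p p') (pair_pmf q q') \<le> tv_dist p q + tv_dist p' q'"
  using tv_dist_triangle[of "pair_pmf p p'" "pair_pmf q q'" "pair_pmf q p'"]
    tv_dist_pair_pmf_left_le[of p p' q] tv_dist_pair_pmf_right_le[of q p' q'] by linarith

definition interchange :: "('a \<times> 'b) \<times> ('c \<times> 'd) \<Rightarrow> ('a \<times> 'c) \<times> ('b \<times> 'd)" where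
  "interchange = (\<lambda>((a, b), (c, d)). ((a, c), (b, d)))"

lemma interchange_interchange [simp]: "interchange (interchange z) = z"
  by (auto simp: interchange_def split: prod.splits)

lemma pair_pmf_interchange:
  "pair_pmf (pair_pmf p p') (pair_pmf q q') = map_pmf interchange (pair_pmf (pair_pmf p q) (pair_pmf p' q'))"
proof (rule pmf_eqI)
  fix z :: "('a \<times> 'b) \<times> ('c \<times> 'd)"
  obtain a b c d where z: "z = ((a, b), (c, d))"
    by (metis prod.exhaust)
  have "pmf (map_pmf interchange (pair_pmf (pair_pmf p q) (pair_pmf p' q'))) (interchange (interchange z))
      = pmf (pair_pmf (pair_pmf p q) (pair_pmf p' q')) (interchange z)"
    by (rule pmf_map_inj') (metis injI interchange_interchange)
  then show "pmf (pair_pmf (pair_pmf p p') (pair_pmf q q')) z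
      = pmf (map_pmf interchange (pair_pmf (pair_pmf p q) (pair_pmf p' q'))) z"
    by (simp add: z interchange_def pmf_pair)
qed

lemma marg1_tensor_sq:
  "x < n \<Longrightarrow> marg1 (tensor_sq n \<mu>) x = pair_pmf (marg1 \<mu> x) (marg1 \<mu> x)"
  unfolding marg1_def tensor_sq_def map_pair[symmetric] map_pmf_comp
  by (rule map_pmf_cong) auto

lemma marg2_tensor_sq:
  "x < n \<Longrightarrow> y < n \<Longrightarrow>
    marg2 (tensor_sq n \<mu>) x y = map_pmf interchange (pair_pmf (marg2 \<mu> x y) (marg2 \<mu> x y))"
  unfolding marg2_def tensor_sq_def map_pair[symmetric] map_pmf_comp
  by (rule map_pmf_cong) (auto simp: interchange_def)

lemma tv_dist_tensor_sq_le:
  assumes "x < n" "y < n"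
  shows "tv_dist (marg2 (tensor_sq n \<mu>) x y) (pair_pmf (marg1 (tensor_sq n \<mu>) x) (marg1 (tensor_sq n \<mu>) y))
     \<le> 2 * tv_dist (marg2 \<mu> x y) (pair_pmf (marg1 \<mu> x) (marg1 \<mu> y))"
proof -
  let ?P = "marg2 \<mu> x y" and ?Q = "pair_pmf (marg1 \<mu> x) (marg1 \<mu> y)"
  have "tv_dist (marg2 (tensor_sq n \<mu>) x y) (pair_pmf (marg1 (tensor_sq n \<mu>) x) (marg1 (tensor_sq n \<mu>) y))
      = tv_dist (map_pmf interchange (pair_pmf ?P ?P)) (map_pmf interchange (pair_pmf ?Q ?Q))"
    using assms by (simp add: marg1_tensor_sq marg2_tensor_sq pair_pmf_interchange[symmetric])
  also have "\<dots> \<le> tv_dist (pair_pmf ?P ?P) (pair_pmf ?Q ?Q)"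
    by (rule tv_dist_map_pmf_le)
  also have "\<dots> \<le> 2 * tv_dist ?P ?Q"
    using tv_dist_pair_pmf_le[of ?P ?P ?Q ?Q] by simp
  finally show ?thesis .
qed

lemma eps2_symmetric_tensor_sq:
  assumes "eps2_symmetric n \<delta> \<mu>"
  shows "eps2_symmetric n (2 * \<delta>) (tensor_sq n \<mu>)"
proof -
  let ?S = "\<Sum>x<n. \<Sum>y<n. tv_dist (marg2 \<mu> x y) (pair_pmf (marg1 \<mu> x) (marg1 \<mu> y))"
  let ?T = "\<Sum>x<n. \<Sum>y<n. tv_dist (marg2 (tensor_sq n \<mu>) x y)
              (pair_pmf (marg1 (tensor_sq n \<mu>) x) (marg1 (tensor_sq n \<mu>) y))"
  have "?T \<le> (\<Sum>x<n. \<Sum>y<n. 2 * tv_dist (marg2 \<mu> x y) (pair_pmf (marg1 \<mu> x) (marg1 \<mu> y)))"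
    by (intro sum_mono tv_dist_tensor_sq_le) auto
  then have "?T \<le> 2 * ?S"
    by (simp add: sum_distrib_left)
  then have "1 / (real n)^2 * ?T \<le> 1 / (real n)^2 * (2 * ?S)"
    by (rule mult_left_mono) simp
  also have "\<dots> = 2 * (1 / (real n)^2 * ?S)"
    by simp
  also have "\<dots> < 2 * \<delta>"
    using assms unfolding eps2_symmetric_def by simp
  finally show ?thesis
    unfolding eps2_symmetric_def .
qed

theorem proposition2p5:
  "\<forall>\<epsilon>>0. \<exists>\<delta>>0. \<exists>n0::nat. \<forall>n\<ge>n0. \<forall>\<mu> :: (nat \<Rightarrow> 'a::finite) pmf.
     set_pmf \<mu> \<subseteq> PiE {..<n} (\<lambda>_. UNIV) \<longrightarrow> eps2_symmetric n \<delta> \<mu> \<longrightarrow>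
     eps2_symmetric n \<epsilon> (tensor_sq n \<mu>)"
proof (intro allI impI)
  fix \<epsilon> :: real
  assume "\<epsilon> > 0"
  have "eps2_symmetric n \<epsilon> (tensor_sq n \<mu>)" if "eps2_symmetric n (\<epsilon> / 2) \<mu>"
    for n and \<mu> :: "(nat \<Rightarrow> 'a) pmf"
    using eps2_symmetric_tensor_sq[OF that] by simp
  with \<open>\<epsilon> > 0\<close> show "\<exists>\<delta>>0. \<exists>n0::nat. \<forall>n\<ge>n0. \<forall>\<mu> :: (nat \<Rightarrow> 'a) pmf.
     set_pmf \<mu> \<subseteq> PiE {..<n} (\<lambda>_. UNIV) \<longrightarrow> eps2_symmetric n \<delta> \<mu> \<longrightarrow>
     eps2_symmetric n \<epsilon> (tensor_sq n \<mu>)"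
    by (intro exI[of _ "\<epsilon> / 2"] exI[of _ 0]) simp
qed

end
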